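(* Assume the setting in the context (in particular Assumption (A)). Let $\rho>0$, $z_0\in V_f(\rho)$ and $\epsilon>0$, run Algorithm $\mathcal{A}_*$ from $z_0$ with accuracy $\epsilon$, and let $$D:=\left\lceil5+\frac{1}{\ln15}\ln\left(1+\frac{f(z_0)-f^*}{\epsilon}\right)\right\rceil.$$ If $j_{out}\geq D$, then $m_{\ell+1}\leq\frac{1}{\sqrt{15}}m_{\ell+1+D}$ for all $\ell\in\{0,1,\dots,j_{out}-D\}$.
   Context: Let $f:\mathbb{R}^n\to(-\infty,\infty]$ be a proper closed convex function such that the problem $f^*=\min_{x\in\mathbb{R}^n}f(x)$ is solvable. Let $\Omega_f=\{x: f(x)=f^*\}$, fix a norm $\|\cdot\|$ on $\mathbb{R}^n$ with dual norm $\|y\|_*=\sup\{y^Tz:\|z\|\leq 1\}$, and for $x\in\mathbb{R}^n$ let $\bar x=\arg\min_{z\in\Omega_f}\|x-z\|$. For $\rho\geq0$ let $V_f(\rho)=\{x: f(x)-f^*\leq\rho\}$. Let $\mathcal{A}$ be an iterative algorithm: for $x_0\in\mathrm{dom} f$ and integer $k\geq1$, $\mathcal{A}(x_0,k)$ denotes its $k$-th iterate started from $x_0$ (and $\mathcal{A}(x_0,0)=x_0$). Assumption (A): (i) for every $\rho>0$ there is $\mu_\rho>0$ with $f(x_0)-f^*\geq\frac{\mu_\rho}{2}\|x_0-\bar x_0\|^2$ for all $x_0\in V_f(\rho)$; (ii) there exist $a_f>0$, $L_f>0$ and $g:\mathbb{R}^n\to\mathbb{R}^n$ with $g(x)=0\iff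 x\in\Omega_f$ such that for every $x_0\in\mathrm{dom} f$: $f(\mathcal{A}(x_0,1))\leq f(x_0)-\frac{1}{2L_f}\|g(x_0)\|_*^2$ and $f(\mathcal{A}(x_0,k))-f^*\leq\frac{a_f}{(k+1)^2}\|x_0-\bar x_0\|^2$ for all $k\geq1$; (iii) $\bar n_\rho:=\max\{\frac12,\sqrt{2a_f/\mu_\rho}\}$. Procedure $\mathcal{A}_d(r,n)$ (input $r\in\mathrm{dom} f$, $n\in\mathbb{R}$): set $x_0=r$, $k=0$. Repeat: $k\gets k+1$; set $x_k=\mathcal{A}(x_0,k)$ if $f(\mathcal{A}(x_0,k))\leq f(x_{k-1})$, and $x_k=x_{k-1}$ otherwise; $\ell=\lfloor k/2\rfloor$; until $k\geq n$ and $f(x_\ell)-f(x_k)\leq\frac13(f(x_0)-f(x_\ell))$. Output $z=x_k$, $m=k$. Algorithm $\mathcal{A}_*(z_0)$ (input $z_0\in\mathrm{dom} f$, $\epsilon>0$): set $m_0=1$, $m_{-1}=1$, $j=-1$. Repeat: $j\gets j+1$; $s_j=\sqrt{\frac{f(z_{j-1})-f(z_j)}{f(z_{j-2})-f(z_j)}}$ if $j\geq2$ and $s_j=0$ otherwise; $n_j=\max\{m_j,4s_jm_{j-1}\}$; $[z_{j+1},m_{j+1}]=\mathcal{A}_d(z_j,n_j)$; until $f(z_j)-f(z_{j+1})\leq\epsilon$. Output $z_{out}=z_{j+1}$, $j_{out}=j$. *)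

theory Defs
  imports "HOL-Analysis.Analysis"
begin

(* An extended-real-valued function f : R^n -> (-inf, inf] is represented by its
   effective domain C (= dom f) and a real-valued function f that is meaningful on C. *)

definition is_norm :: "('a::euclidean_space \<Rightarrow> real) \<Rightarrow> bool" where
  "is_norm N \<longleftrightarrow> (\<forall>x y. N (x + y) \<le> N x + N y) \<and> (\<forall>c x. N (c *\<^sub>R x) = \<bar>c\<bar> * N x)
                   \<and> (\<forall>x. N x = 0 \<longleftrightarrow> x = 0)"

definition dual_norm :: "('a::euclidean_space \<Rightarrow> real) \<Rightarrow> 'a \<Rightarrow> real" where
  "dual_norm N y = Sup {y \<bullet> z | z. N z \<le> 1}"

definition proper_closed_convex :: "'a::euclidean_space set \<Rightarrow> ('a \<Rightarrow> real) \<Rightarrow> bool" where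
  "proper_closed_convex C f \<longleftrightarrow> C \<noteq> {} \<and> convex C \<and> convex_on C f
      \<and> closed {(x, t). x \<in> C \<and> f x \<le> t}"

definition solset :: "'a set \<Rightarrow> ('a \<Rightarrow> real) \<Rightarrow> real \<Rightarrow> 'a set" where
  "solset C f fstar = {x \<in> C. f x = fstar}"

definition sublevel :: "'a set \<Rightarrow> ('a \<Rightarrow> real) \<Rightarrow> real \<Rightarrow> real \<Rightarrow> 'a set" where
  "sublevel C f fstar \<rho> = {x \<in> C. f x - fstar \<le> \<rho>}"

(* ||x - xbar|| = distance (in the norm N) from x to Omega_f *)
definition ndist :: "('a::euclidean_space \<Rightarrow> real) \<Rightarrow> 'a set \<Rightarrow> 'a \<Rightarrow> real" where
  "ndist N S x = Inf {N (x - z) | z. z \<in> S}"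

definition assumption_A ::
  "'a::euclidean_space set \<Rightarrow> ('a \<Rightarrow> real) \<Rightarrow> real \<Rightarrow> ('a \<Rightarrow> real) \<Rightarrow> ('a \<Rightarrow> nat \<Rightarrow> 'a) \<Rightarrow> bool" where
  "assumption_A C f fstar N A \<longleftrightarrow>
     (\<forall>\<rho>>0. \<exists>\<mu>>0. \<forall>x0 \<in> sublevel C f fstar \<rho>.
         f x0 - fstar \<ge> \<mu> / 2 * (ndist N (solset C f fstar) x0)\<^sup>2)
   \<and> (\<exists>af>0. \<exists>Lf>0. \<exists>g::'a \<Rightarrow> 'a. (\<forall>x. g x = 0 \<longleftrightarrow> x \<in> solset C f fstar) \<and>
        (\<forall>x0 \<in> C. A x0 1 \<in> C \<and> f (A x0 1) \<le> f x0 - 1 / (2 * Lf) * (dual_norm N (g x0))\<^sup>2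
                \<and> (\<forall>k\<ge>1. A x0 k \<in> C \<and>
                      f (A x0 k) - fstar \<le> af / (real k + 1)\<^sup>2 * (ndist N (solset C f fstar) x0)\<^sup>2)))"

fun Ad_x :: "('a \<Rightarrow> nat \<Rightarrow> 'a) \<Rightarrow> ('a \<Rightarrow> real) \<Rightarrow> 'a \<Rightarrow> nat \<Rightarrow> 'a" where
  "Ad_x A f r 0 = r"
| "Ad_x A f r (Suc k) =
     (if f (A r (Suc k)) \<le> f (Ad_x A f r k) then A r (Suc k) else Ad_x A f r k)"

definition Ad_m :: "('a \<Rightarrow> nat \<Rightarrow> 'a) \<Rightarrow> ('a \<Rightarrow> real) \<Rightarrow> 'a \<Rightarrow> real \<Rightarrow> nat" where
  "Ad_m A f r n = (LEAST k. k \<ge> 1 \<and> real k \<ge> n \<and>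
       f (Ad_x A f r (k div 2)) - f (Ad_x A f r k) \<le> (f r - f (Ad_x A f r (k div 2))) / 3)"

definition Ad :: "('a \<Rightarrow> nat \<Rightarrow> 'a) \<Rightarrow> ('a \<Rightarrow> real) \<Rightarrow> 'a \<Rightarrow> real \<Rightarrow> 'a \<times> nat" where
  "Ad A f r n = (Ad_x A f r (Ad_m A f r n), Ad_m A f r n)"

(* Algorithm A_*: Astar A f z0 j = (z_j, m_j); for j = 0 the value m_{j-1} = m_{-1} = 1
   coincides with m_0 = 1, so natural-number subtraction j - 1 is harmless. *)
fun Astar :: "('a \<Rightarrow> nat \<Rightarrow> 'a) \<Rightarrow> ('a \<Rightarrow> real) \<Rightarrow> 'a \<Rightarrow> nat \<Rightarrow> 'a \<times> nat" where
  "Astar A f z0 0 = (z0, 1)"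
| "Astar A f z0 (Suc j) =
     (let zj = fst (Astar A f z0 j);
          mj = snd (Astar A f z0 j);
          mj1 = snd (Astar A f z0 (j - 1));
          s = (if j \<ge> 2 then
                 sqrt ((f (fst (Astar A f z0 (j - 1))) - f zj) / (f (fst (Astar A f z0 (j - 2))) - f zj))
               else 0);
          n = max (real mj) (4 * s * real mj1)
      in Ad A f zj n)"

definition Astar_jout :: "('a \<Rightarrow> nat \<Rightarrow> 'a) \<Rightarrow> ('a \<Rightarrow> real) \<Rightarrow> 'a \<Rightarrow> real \<Rightarrow> nat" where
  "Astar_jout A f z0 \<epsilon> =
     (LEAST j. f (fst (Astar A f z0 j)) - f (fst (Astar A f z0 (Suc j))) \<le> \<epsilon>)"

end

theory Submission
  imports Defs "HOL-Real_Asymp.Real_Asymp"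
begin

(* Write m_j for the restart lengths of A_* and delta_j = f(z_j) - f(z_{j+1}) for its decreases.
   Since A_d runs at least n_j >= 4 s_j m_{j-1} steps, where
   s_j^2 = delta_{j-1} / (delta_{j-2} + delta_{j-1}), the potential delta_j / (m_{j+1} m_{j+2})^4
   shrinks by a factor 15 at every restart as long as the restart lengths grow by less than
   sqrt 15 over two restarts.  If m_{l+1+D} < sqrt 15 m_{l+1}, this holds throughout the window,
   and after D - 1 restarts the decrease delta_{l+D-1} > eps would be smaller than
   15^(5-D) (f(z_0) - fstar) <= eps.  That A_d stops at all follows from f(x_k) --> fstar,
   which is implied by the O(1/k^2) rate of Assumption (A)(ii). *)

lemma halving_stop_exists:
  fixes \<phi> :: "nat \<Rightarrow> real"
  assumes lim: "\<phi> \<longlonglongrightarrow> L" and lower: "\<And>k. L \<le> \<phi> k" and upper: "\<And>k. \<phi> k \<le> \<phi> 0"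
  shows "\<exists>k\<ge>1. n \<le> real k \<and> \<phi> (k div 2) - \<phi> k \<le> (\<phi> 0 - \<phi> (k div 2)) / 3"
proof -
  have "eventually (\<lambda>t. \<phi> t - L \<le> (\<phi> 0 - L) / 4) sequentially"
  proof (cases "\<phi> 0 = L")
    case True
    then show ?thesis using upper by (simp add: always_eventually)
  next
    case False
    then have "L < L + (\<phi> 0 - L) / 4" using lower[of 0] by simp
    from order_tendstoD(2)[OF lim this] show ?thesis by eventually_elim linarith
  qed
  moreover have "eventually (\<lambda>t. max 1 (nat \<lceil>n\<rceil>) \<le> t) sequentially"
    by (rule eventually_ge_at_top)
  ultimately obtain t where close: "\<phi> t - L \<le> (\<phi> 0 - L) / 4" and t: "max 1 (nat \<lceil>n\<rceil>) \<le> t"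
    using eventually_sequentially eventually_conj by (metis (no_types, lifting) order_refl)
  have "n \<le> real (2 * t)" using t by linarith
  moreover have "\<phi> t - \<phi> (2 * t) \<le> (\<phi> 0 - \<phi> t) / 3"
    using close lower[of "2 * t"] by simp
  ultimately show ?thesis using t by (intro exI[of _ "2 * t"]) auto
qed

lemma gap_ratio_contraction:
  fixes d0 d1 a b :: real
  assumes "0 < d0" "0 \<le> d1" "0 \<le> a" "a \<le> b" "b\<^sup>2 \<le> 15 * a\<^sup>2"
    and growth: "4 * sqrt (d1 / (d0 + d1)) * a \<le> b"
  shows "15 * d1 * a ^ 4 \<le> d0 * b ^ 4"
proof -
  have "(4 * sqrt (d1 / (d0 + d1)) * a)\<^sup>2 \<le> b\<^sup>2"
    using assms by (intro power_mono) auto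
  then have "16 * d1 * a\<^sup>2 \<le> (d0 + d1) * b\<^sup>2"
    using assms by (simp add: power_mult_distrib field_simps)
  then have d1_bound: "d1 * (16 * a\<^sup>2 - b\<^sup>2) \<le> d0 * b\<^sup>2"
    by (simp add: algebra_simps)
  have "0 \<le> (b\<^sup>2 - a\<^sup>2) * (15 * a\<^sup>2 - b\<^sup>2)"
    using assms by (intro mult_nonneg_nonneg) (auto intro: power_mono)
  then have "15 * a ^ 4 \<le> b\<^sup>2 * (16 * a\<^sup>2 - b\<^sup>2)"
    by (simp add: algebra_simps power2_eq_square power4_eq_xxxx)
  then have "15 * d1 * a ^ 4 \<le> b\<^sup>2 * (d1 * (16 * a\<^sup>2 - b\<^sup>2))"
    using assms(2) by (metis mult.assoc mult.left_commute mult_left_mono)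
  also have "\<dots> \<le> b\<^sup>2 * (d0 * b\<^sup>2)"
    using d1_bound by (simp add: mult_left_mono)
  finally show ?thesis by (simp add: power2_eq_square power4_eq_xxxx algebra_simps)
qed

lemma gap_potential_decay:
  fixes m \<delta> :: "nat \<Rightarrow> real"
  assumes "mono m" and m_pos: "\<And>i. 0 < m i"
    and growth: "\<And>j. 4 * sqrt (\<delta> (j + 1) / (\<delta> j + \<delta> (j + 1))) * m (j + 1) \<le> m (j + 3)"
    and \<delta>_pos: "\<And>i. i \<le> k \<Longrightarrow> 0 < \<delta> i"
    and slow: "\<And>i. i < k \<Longrightarrow> (m (i + 3))\<^sup>2 \<le> 15 * (m (i + 1))\<^sup>2"
  shows "15 ^ k * \<delta> k / (m (k + 1) * m (k + 2)) ^ 4 \<le> \<delta> 0 / (m 1 * m 2) ^ 4"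
  using \<delta>_pos slow
proof (induction k)
  case 0
  then show ?case by (simp add: numeral_2_eq_2)
next
  case (Suc k)
  have "15 * \<delta> (k + 1) * m (k + 1) ^ 4 \<le> \<delta> k * m (k + 3) ^ 4"
    using gap_ratio_contraction[OF _ _ _ _ _ growth[of k]] Suc.prems m_pos[of "k + 1"] \<open>mono m\<close>
    by (simp add: monoD less_imp_le)
  moreover have "0 < m (k + 1)" "0 < m (k + 2)" "0 < m (k + 3)"
    using m_pos by auto
  ultimately have "15 * \<delta> (k + 1) / (m (k + 2) * m (k + 3)) ^ 4 \<le> \<delta> k / (m (k + 1) * m (k + 2)) ^ 4"
    by (simp add: divide_simps power_mult_distrib mult_right_mono algebra_simps)
  then have "15 ^ k * (15 * \<delta> (k + 1) / (m (k + 2) * m (k + 3)) ^ 4)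
      \<le> 15 ^ k * (\<delta> k / (m (k + 1) * m (k + 2)) ^ 4)"
    by (rule mult_left_mono) simp
  then have "15 ^ Suc k * \<delta> (Suc k) / (m (Suc k + 1) * m (Suc k + 2)) ^ 4
      \<le> 15 ^ k * \<delta> k / (m (k + 1) * m (k + 2)) ^ 4"
    by (simp add: numeral_3_eq_3 ac_simps)
  also have "\<dots> \<le> \<delta> 0 / (m 1 * m 2) ^ 4"
    using Suc by simp
  finally show ?case .
qed

lemma gap_bound_under_slow_growth:
  fixes m \<delta> :: "nat \<Rightarrow> real"
  assumes "mono m" and m_pos: "\<And>i. 0 < m i"
    and growth: "\<And>j. 4 * sqrt (\<delta> (j + 1) / (\<delta> j + \<delta> (j + 1))) * m (j + 1) \<le> m (j + 3)"
    and \<delta>_pos: "\<And>i. i \<le> k \<Longrightarrow> 0 < \<delta> i"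
    and slow: "m (k + 2) ^ 2 \<le> 15 * m 1 ^ 2"
  shows "15 ^ k * \<delta> k \<le> 15 ^ 4 * \<delta> 0"
proof -
  have m_le: "m i \<le> m j" if "i \<le> j" for i j
    using \<open>mono m\<close> that by (rule monoD)
  have "m (i + 3) ^ 2 \<le> 15 * m (i + 1) ^ 2" if "i < k" for i
  proof -
    have "m (i + 3) ^ 2 \<le> m (k + 2) ^ 2"
      using that m_pos by (intro power_mono m_le) (auto simp: less_imp_le)
    also have "\<dots> \<le> 15 * m 1 ^ 2"
      by (rule slow)
    also have "\<dots> \<le> 15 * m (i + 1) ^ 2"
      using m_pos[of 1] by (intro mult_left_mono power_mono m_le) auto
    finally show ?thesis .
  qed
  with gap_potential_decay[OF \<open>mono m\<close> m_pos growth \<delta>_pos]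
  have decay: "15 ^ k * \<delta> k / (m (k + 1) * m (k + 2)) ^ 4 \<le> \<delta> 0 / (m 1 * m 2) ^ 4"
    by blast
  have "(m (k + 1) * m (k + 2)) ^ 4 \<le> (m (k + 2) ^ 2) ^ 4"
    using m_pos by (intro power_mono) (auto simp: power2_eq_square less_imp_le m_le)
  also have "\<dots> \<le> (15 * m 1 ^ 2) ^ 4"
    using slow by (intro power_mono) auto
  finally have upper: "(m (k + 1) * m (k + 2)) ^ 4 \<le> 15 ^ 4 * m 1 ^ 8"
    by (simp add: power_mult_distrib flip: power_mult)
  have "m 1 ^ 8 = (m 1 * m 1) ^ 4"
    by (simp flip: power2_eq_square power_mult)
  also have "\<dots> \<le> (m 1 * m 2) ^ 4"
    using m_pos[of 1] by (intro power_mono mult_left_mono) (auto simp: m_le)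
  finally have lower: "m 1 ^ 8 \<le> (m 1 * m 2) ^ 4" .
  have "15 ^ k * \<delta> k = 15 ^ k * \<delta> k / (m (k + 1) * m (k + 2)) ^ 4 * (m (k + 1) * m (k + 2)) ^ 4"
    using m_pos[of "k + 1"] m_pos[of "k + 2"] by simp
  also have "\<dots> \<le> \<delta> 0 / (m 1 * m 2) ^ 4 * (15 ^ 4 * m 1 ^ 8)"
    using decay upper \<delta>_pos[of 0] by (intro mult_mono) auto
  also have "\<dots> \<le> \<delta> 0 / m 1 ^ 8 * (15 ^ 4 * m 1 ^ 8)"
    using lower \<delta>_pos[of 0] m_pos[of 1] m_pos[of 2] by (intro mult_right_mono divide_left_mono) auto
  also have "\<dots> = 15 ^ 4 * \<delta> 0"
    using m_pos[of 1] by simp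
  finally show ?thesis .
qed

lemma restart_window_growth:
  fixes m \<delta> :: "nat \<Rightarrow> real" and d :: nat and \<epsilon> :: real
  assumes "mono m" and m_pos: "\<And>i. 0 < m i"
    and growth: "\<And>j. 4 * sqrt (\<delta> (j + 1) / (\<delta> j + \<delta> (j + 1))) * m (j + 1) \<le> m (j + 3)"
    and gaps: "\<And>i. i < d \<Longrightarrow> \<epsilon> < \<delta> i" and "0 < \<epsilon>"
    and "5 \<le> d" and first_gap: "\<delta> 0 \<le> 15 ^ (d - 5) * \<epsilon>"
  shows "m 1 \<le> m (1 + d) / sqrt 15"
proof (rule ccontr)
  assume "\<not> ?thesis"
  then have "m (d + 1) < sqrt 15 * m 1"
    by (simp add: field_simps)
  then have "m (d + 1) ^ 2 \<le> (sqrt 15 * m 1) ^ 2"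
    using m_pos by (intro power_mono) (auto simp: less_imp_le)
  then have "m (d - 1 + 2) ^ 2 \<le> 15 * m 1 ^ 2"
    using \<open>5 \<le> d\<close> by (simp add: power_mult_distrib)
  moreover have "0 < \<delta> i" if "i \<le> d - 1" for i
    using gaps[of i] that \<open>0 < \<epsilon>\<close> \<open>5 \<le> d\<close> by fastforce
  ultimately have "15 ^ (d - 1) * \<delta> (d - 1) \<le> 15 ^ 4 * \<delta> 0"
    by (rule gap_bound_under_slow_growth[OF \<open>mono m\<close> m_pos growth, rotated])
  also have "\<dots> \<le> 15 ^ 4 * 15 ^ (d - 5) * \<epsilon>"
    using first_gap by simp
  also have "\<dots> = 15 ^ (d - 1) * \<epsilon>"
  proof -
    have "d - 1 = 4 + (d - 5)"
      using \<open>5 \<le> d\<close> by simp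
    then show ?thesis
      by (simp only: power_add)
  qed
  finally show False
    using gaps[of "d - 1"] \<open>5 \<le> d\<close> by simp
qed

lemma ceiling_log_bound:
  fixes F \<epsilon> :: real
  assumes "0 \<le> F" "0 < \<epsilon>"
  defines "d \<equiv> nat \<lceil>5 + ln (1 + F / \<epsilon>) / ln 15\<rceil>"
  shows "5 \<le> d" and "F \<le> 15 ^ (d - 5) * \<epsilon>"
proof -
  have ln_nonneg: "0 \<le> ln (1 + F / \<epsilon>) / ln 15"
    using assms by simp
  then show "5 \<le> d"
    unfolding d_def by linarith
  have "ln (1 + F / \<epsilon>) / ln 15 \<le> real (d - 5)"
    using ln_nonneg unfolding d_def by linarith
  then have "ln (1 + F / \<epsilon>) \<le> ln (15 ^ (d - 5))"
    by (simp add: ln_realpow divide_le_eq)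
  then have "1 + F / \<epsilon> \<le> 15 ^ (d - 5)"
    using assms by (simp add: add_pos_nonneg)
  then show "F \<le> 15 ^ (d - 5) * \<epsilon>"
    using assms by (simp add: field_simps)
qed

lemma Ad_x_le_start: "f (Ad_x A f r k) \<le> f r"
  by (induction k) auto

lemma Ad_x_le_iterate: "1 \<le> k \<Longrightarrow> f (Ad_x A f r k) \<le> f (A r k)"
  by (cases k) auto

definition Astar_gap :: "('a \<Rightarrow> nat \<Rightarrow> 'a) \<Rightarrow> ('a \<Rightarrow> real) \<Rightarrow> 'a \<Rightarrow> nat \<Rightarrow> real" where
  "Astar_gap A f z0 j = f (fst (Astar A f z0 j)) - f (fst (Astar A f z0 (Suc j)))"

lemma Astar_fst_Suc:
  "fst (Astar A f z0 (Suc j)) = Ad_x A f (fst (Astar A f z0 j)) (snd (Astar A f z0 (Suc j)))"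
  by (simp add: Let_def Ad_def)

lemma Astar_f_le_start: "f (fst (Astar A f z0 j)) \<le> f z0"
proof (induction j)
  case (Suc j)
  then show ?case
    unfolding Astar_fst_Suc by (meson Ad_x_le_start order_trans)
qed simp

lemma Astar_restart:
  "Astar A f z0 (Suc (Suc (Suc j))) = Ad A f (fst (Astar A f z0 (Suc (Suc j))))
     (max (real (snd (Astar A f z0 (Suc (Suc j)))))
       (4 * sqrt (Astar_gap A f z0 (Suc j) / (Astar_gap A f z0 j + Astar_gap A f z0 (Suc j)))
          * real (snd (Astar A f z0 (Suc j)))))"
  by (subst Astar.simps(2)) (simp add: Let_def Astar_gap_def del: Astar.simps)

lemma less_Astar_jout_imp_gap_gt:
  "j < Astar_jout A f z0 \<epsilon> \<Longrightarrow> \<epsilon> < Astar_gap A f z0 j"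
  unfolding Astar_jout_def Astar_gap_def using not_less_Least by force

locale accelerated_method =
  fixes C :: "'a set" and f :: "'a \<Rightarrow> real" and fstar :: real and A :: "'a \<Rightarrow> nat \<Rightarrow> 'a"
  assumes iterate_in_dom: "x \<in> C \<Longrightarrow> 1 \<le> k \<Longrightarrow> A x k \<in> C"
    and min_le: "x \<in> C \<Longrightarrow> fstar \<le> f x"
    and rate: "x \<in> C \<Longrightarrow> \<exists>K. \<forall>k\<ge>1. f (A x k) - fstar \<le> K / (real k + 1)\<^sup>2"
begin

lemma Ad_x_in_dom: "r \<in> C \<Longrightarrow> Ad_x A f r k \<in> C"
  by (induction k) (auto simp: iterate_in_dom)

lemma Ad_x_tendsto:
  assumes "r \<in> C"
  shows "(\<lambda>k. f (Ad_x A f r k)) \<longlonglongrightarrow> fstar"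
proof -
  obtain K where K: "\<And>k. 1 \<le> k \<Longrightarrow> f (A r k) - fstar \<le> K / (real k + 1)\<^sup>2"
    using rate[OF assms] by blast
  show ?thesis
  proof (rule tendsto_sandwich[OF _ _ tendsto_const])
    show "eventually (\<lambda>k. fstar \<le> f (Ad_x A f r k)) sequentially"
      using min_le Ad_x_in_dom[OF assms] by simp
    show "eventually (\<lambda>k. f (Ad_x A f r k) \<le> fstar + K / (real k + 1)\<^sup>2) sequentially"
      using eventually_ge_at_top[of 1]
    proof eventually_elim
      case (elim k)
      then show ?case using K[OF elim] Ad_x_le_iterate[OF elim, of f A r] by linarith
    qed
    show "(\<lambda>k. fstar + K / (real k + 1)\<^sup>2) \<longlonglongrightarrow> fstar"
      by real_asymp
  qed
qed

lemma Ad_m_ge: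
  assumes "r \<in> C"
  shows "n \<le> real (Ad_m A f r n)"
proof -
  have "\<exists>k\<ge>1. n \<le> real k \<and>
      f (Ad_x A f r (k div 2)) - f (Ad_x A f r k) \<le> (f (Ad_x A f r 0) - f (Ad_x A f r (k div 2))) / 3"
    using min_le[OF Ad_x_in_dom[OF assms]] Ad_x_le_start[of f A r]
    by (intro halving_stop_exists[OF Ad_x_tendsto[OF assms]]) simp_all
  from LeastI_ex[OF this[unfolded Ad_x.simps(1) Bex_def]] show ?thesis
    unfolding Ad_m_def by blast
qed

lemma Astar_in_dom: "z0 \<in> C \<Longrightarrow> fst (Astar A f z0 j) \<in> C"
  by (induction j) (auto simp: Let_def Ad_def Ad_x_in_dom)

lemma Astar_m_mono:
  assumes "z0 \<in> C"
  shows "mono (\<lambda>j. real (snd (Astar A f z0 j)))"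
proof (rule mono_iff_le_Suc[THEN iffD2], intro allI)
  fix j
  show "real (snd (Astar A f z0 j)) \<le> real (snd (Astar A f z0 (Suc j)))"
    unfolding Astar.simps Let_def Ad_def snd_conv
    by (rule order_trans[OF max.cobounded1 Ad_m_ge[OF Astar_in_dom[OF assms]]])
qed

lemma Astar_m_growth:
  assumes "z0 \<in> C"
  shows "4 * sqrt (Astar_gap A f z0 (j + 1) / (Astar_gap A f z0 j + Astar_gap A f z0 (j + 1)))
      * real (snd (Astar A f z0 (j + 1))) \<le> real (snd (Astar A f z0 (j + 3)))"
  unfolding One_nat_def numeral_3_eq_3 add_Suc_right add_0_right Astar_restart Ad_def snd_conv
  by (rule order_trans[OF max.cobounded2 Ad_m_ge[OF Astar_in_dom[OF assms]]])

lemma Astar_gap_le: "z0 \<in> C \<Longrightarrow> Astar_gap A f z0 j \<le> f z0 - fstar"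
  using Astar_f_le_start[of f A z0 j] min_le[OF Astar_in_dom, of z0 "Suc j"]
  unfolding Astar_gap_def by simp

end

lemma assumption_A_imp_accelerated_method:
  assumes "assumption_A C f fstar N A" and "\<forall>x\<in>C. fstar \<le> f x"
  shows "accelerated_method C f fstar A"
proof -
  obtain af where "\<forall>x\<in>C. \<forall>k\<ge>1. A x k \<in> C \<and>
      f (A x k) - fstar \<le> af / (real k + 1)\<^sup>2 * (ndist N (solset C f fstar) x)\<^sup>2"
    using assms(1) unfolding assumption_A_def by metis
  then show ?thesis
    using assms(2) by unfold_locales (auto intro!: exI[of _ "af * (ndist N (solset C f fstar) _)\<^sup>2"])
qed

theorem lemma1:
  fixes C :: "'a::euclidean_space set" and f :: "'a \<Rightarrow> real" and fstar :: real
    and N :: "'a \<Rightarrow> real" and A :: "'a \<Rightarrow> nat \<Rightarrow> 'a"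
    and \<rho> \<epsilon> :: real and z0 :: 'a
  assumes pcc: "proper_closed_convex C f"
    and solv: "\<exists>x\<in>C. f x = fstar" and minimal: "\<forall>x\<in>C. fstar \<le> f x"
    and norm: "is_norm N"
    and A0: "\<forall>x. A x 0 = x"
    and asmA: "assumption_A C f fstar N A"
    and rho: "\<rho> > 0" and z0: "z0 \<in> sublevel C f fstar \<rho>" and eps: "\<epsilon> > 0"
  defines "D \<equiv> \<lceil>5 + ln (1 + (f z0 - fstar) / \<epsilon>) / ln 15\<rceil>"
  shows "int (Astar_jout A f z0 \<epsilon>) \<ge> D \<longrightarrow>
    (\<forall>l::nat. int l \<le> int (Astar_jout A f z0 \<epsilon>) - D \<longrightarrow>
       real (snd (Astar A f z0 (l + 1))) \<le> real (snd (Astar A f z0 (l + 1 + nat D))) / sqrt 15)"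
proof (intro impI allI)
  fix l :: nat
  assume "int (Astar_jout A f z0 \<epsilon>) \<ge> D" and l: "int l \<le> int (Astar_jout A f z0 \<epsilon>) - D"
  interpret accelerated_method C f fstar A
    using asmA minimal by (rule assumption_A_imp_accelerated_method)
  have "z0 \<in> C"
    using z0 unfolding sublevel_def by simp
  define d where "d = nat D"
  have "5 \<le> d" and first_gap: "f z0 - fstar \<le> 15 ^ (d - 5) * \<epsilon>"
    using ceiling_log_bound[of "f z0 - fstar" \<epsilon>] min_le[OF \<open>z0 \<in> C\<close>] eps
    unfolding d_def D_def by auto
  then have "l + d \<le> Astar_jout A f z0 \<epsilon>"
    using l unfolding d_def by linarith
  let ?m = "\<lambda>i. real (snd (Astar A f z0 (l + i)))"
  have "?m 1 \<le> ?m (1 + d) / sqrt 15"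
  proof (rule restart_window_growth[where \<delta> = "\<lambda>i. Astar_gap A f z0 (l + i)"])
    show "mono ?m"
      using Astar_m_mono[OF \<open>z0 \<in> C\<close>] by (auto simp: mono_def)
    show "0 < ?m i" for i
      using monoD[OF Astar_m_mono[OF \<open>z0 \<in> C\<close>], of 0 "l + i"] by simp
    show "4 * sqrt (Astar_gap A f z0 (l + (j + 1))
          / (Astar_gap A f z0 (l + j) + Astar_gap A f z0 (l + (j + 1)))) * ?m (j + 1)
        \<le> ?m (j + 3)" for j
      using Astar_m_growth[OF \<open>z0 \<in> C\<close>, of "l + j"] by (simp add: add.assoc)
    show "\<epsilon> < Astar_gap A f z0 (l + i)" if "i < d" for i
      using that \<open>l + d \<le> Astar_jout A f z0 \<epsilon>\<close> by (intro less_Astar_jout_imp_gap_gt) simp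
    show "Astar_gap A f z0 (l + 0) \<le> 15 ^ (d - 5) * \<epsilon>"
      using Astar_gap_le[OF \<open>z0 \<in> C\<close>, of l] first_gap by simp
  qed (use eps \<open>5 \<le> d\<close> in auto)
  then show "real (snd (Astar A f z0 (l + 1))) \<le> real (snd (Astar A f z0 (l + 1 + nat D))) / sqrt 15"
    by (simp add: d_def add.assoc)
qed

end
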